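(* Let $p^*\in[0,1]$ satisfy $\varphi(p^* )=p^*$ and $0<\varphi'(p^* )<1$. There exist $\varepsilon,\delta>0$ such that for all sufficiently large $n$ the following holds. Let $X^+(0)\supseteq X^-(0)$ be two configurations in $\mathcal G_n$ differing in exactly one pair $e$, and suppose that for both configurations $Y\in\{X^+(0),X^-(0)\}$, all $G\in\mathcal H_L$ and all pairs $e'$, $|r_G(Y,e')-p^*|<\varepsilon$. Then one step of the Glauber dynamics from $X^+(0)$ and from $X^-(0)$ can be coupled (via the standard monotone coupling: same chosen pair, same uniform random variable for the update) so that $$\mathbb E\, d_H(X^+(1),X^-(1))\le 1-\delta n^{-2},$$ where $d_H$ is the Hamming distance (number of pairs in the symmetric difference).
   Context: Fix an integer $s\ge 1$, graphs $G_1,\dots,G_s$ where $G_i$ has vertex set $V_i=\{1,\dots,|V_i|\}$ and edge set $E_i$, with $G_1$ the single edge on $\{1,2\}$, and an integer $L\ge\max_i|V_i|$. Fix $\beta=(\beta_1,\dots,\beta_s)$ with $\beta_1\in\mathbb R$, $\beta_i>0$ for $i\ge 2$. $\mathcal G_n$ is the set of simple graphs on $[n]$ (a graph is its edge set). For a graph $G=(V,E)$, $V=\{1,\dots,m\}$, and $X\in\mathcal G_n$: $N_G(X)$ is the number of injective $\sigma:V\to[n]$ with $\{\sigma(i),\sigma(j)\}\in X$ for all $\{i,j\}\in E$; for a pair $e\in\binom{[n]}2$, $N_G(X,e)$ is the number of injective $\sigma:V\to[n]$ such that $\{\sigma(i),\sigma(j)\}\in X\cup\{e\}$ for all $\{i,j\}\in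 E$ and $e=\{\sigma(i),\sigma(j)\}$ for some $\{i,j\}\in E$. Gibbs measure $p_n(X)\propto\exp(H(X))$, $H(X)=\sum_i\beta_iN_{G_i}(X)/n^{|V_i|-2}$. Glauber dynamics: from $X$, pick a pair $e$ uniformly among the $\binom n2$ pairs, move to $X\cup\{e\}$ with probability $e^{\partial_eH(X)}/(1+e^{\partial_eH(X)})$, where $\partial_eH(X)=H(X\cup\{e\})-H(X\setminus\{e\})$, and to $X\setminus\{e\}$ otherwise. $\Psi(p)=\sum_{i=1}^s2\beta_i|E_i|p^{|E_i|-1}$, $\varphi(p)=e^{\Psi(p)}/(1+e^{\Psi(p)})$. $\mathcal H_L$ is the set of graphs with at most $L$ vertices and at least $2$ edges. For $G=(V,E)\in\mathcal H_L$: $r_G(X,e)=\big(N_G(X,e)/(2|E|n^{|V|-2})\big)^{1/(|E|-1)}$. *)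

theory Defs
  imports "HOL-Probability.Probability"
begin

text \<open>Pairs (potential edges) on the vertex set [n] = {1..n}; a simple graph on [n] is a subset.\<close>
definition pairs :: "nat \<Rightarrow> nat set set" where
  "pairs n = {e. \<exists>i j. i \<in> {1..n} \<and> j \<in> {1..n} \<and> i \<noteq> j \<and> e = {i, j}}"

text \<open>A pattern graph is a pair (m, E): vertex set {1..m}, edge set E of 2-subsets of {1..m}.\<close>
type_synonym pgraph = "nat \<times> nat set set"

definition is_graph :: "pgraph \<Rightarrow> bool" where
  "is_graph G \<longleftrightarrow> snd G \<subseteq> pairs (fst G)"

definition Ncount :: "nat \<Rightarrow> pgraph \<Rightarrow> nat set set \<Rightarrow> nat" where
  "Ncount n G X = card {\<sigma> \<in> {1..fst G} \<rightarrow>\<^sub>E {1..n}. inj_on \<sigma> {1..fst G} \<and>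
                          (\<forall>ed \<in> snd G. \<sigma> ` ed \<in> X)}"

definition Ncount_e :: "nat \<Rightarrow> pgraph \<Rightarrow> nat set set \<Rightarrow> nat set \<Rightarrow> nat" where
  "Ncount_e n G X e = card {\<sigma> \<in> {1..fst G} \<rightarrow>\<^sub>E {1..n}. inj_on \<sigma> {1..fst G} \<and>
                          (\<forall>ed \<in> snd G. \<sigma> ` ed \<in> X \<union> {e}) \<and> (\<exists>ed \<in> snd G. \<sigma> ` ed = e)}"

definition Ham :: "nat \<Rightarrow> (nat \<Rightarrow> pgraph) \<Rightarrow> (nat \<Rightarrow> real) \<Rightarrow> nat \<Rightarrow> nat set set \<Rightarrow> real" where
  "Ham s Gs \<beta> n X = (\<Sum>i=1..s. \<beta> i * real (Ncount n (Gs i) X) / real n powr (real (fst (Gs i)) - 2))"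

definition Psi :: "nat \<Rightarrow> (nat \<Rightarrow> pgraph) \<Rightarrow> (nat \<Rightarrow> real) \<Rightarrow> real \<Rightarrow> real" where
  "Psi s Gs \<beta> p = (\<Sum>i=1..s. 2 * \<beta> i * real (card (snd (Gs i))) * p ^ (card (snd (Gs i)) - 1))"

definition phi :: "nat \<Rightarrow> (nat \<Rightarrow> pgraph) \<Rightarrow> (nat \<Rightarrow> real) \<Rightarrow> real \<Rightarrow> real" where
  "phi s Gs \<beta> p = exp (Psi s Gs \<beta> p) / (1 + exp (Psi s Gs \<beta> p))"

definition HL :: "nat \<Rightarrow> pgraph set" where
  "HL L = {G. is_graph G \<and> fst G \<le> L \<and> card (snd G) \<ge> 2}"

definition rG :: "nat \<Rightarrow> pgraph \<Rightarrow> nat set set \<Rightarrow> nat set \<Rightarrow> real" where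
  "rG n G X e = (real (Ncount_e n G X e) /
       (2 * real (card (snd G)) * real n powr (real (fst G) - 2))) powr (1 / (real (card (snd G)) - 1))"

definition glauber_step :: "nat \<Rightarrow> (nat \<Rightarrow> pgraph) \<Rightarrow> (nat \<Rightarrow> real) \<Rightarrow> nat \<Rightarrow>
     nat set set \<Rightarrow> nat set \<Rightarrow> real \<Rightarrow> nat set set" where
  "glauber_step s Gs \<beta> n X e u =
     (let d = Ham s Gs \<beta> n (insert e X) - Ham s Gs \<beta> n (X - {e})
      in if u \<le> exp d / (1 + exp d) then insert e X else X - {e})"

definition hamming :: "nat set set \<Rightarrow> nat set set \<Rightarrow> nat" where
  "hamming A B = card ((A - B) \<union> (B - A))"

definition coupled_exp_dist :: "nat \<Rightarrow> (nat \<Rightarrow> pgraph) \<Rightarrow> (nat \<Rightarrow> real) \<Rightarrow> nat \<Rightarrow>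
     nat set set \<Rightarrow> nat set set \<Rightarrow> real" where
  "coupled_exp_dist s Gs \<beta> n Xp Xm =
     measure_pmf.expectation (pmf_of_set (pairs n)) (\<lambda>e.
        integral\<^sup>L (uniform_measure lborel {0..1::real})
          (\<lambda>u. real (hamming (glauber_step s Gs \<beta> n Xp e u) (glauber_step s Gs \<beta> n Xm e u))))"

end

theory Submission
  imports Defs
begin

text \<open>
  Couple the two chains by letting both update the same pair \<open>e'\<close> with the same uniform \<open>u\<close>.
  For \<open>e' = e\<close> they merge; for \<open>e' \<noteq> e\<close> a second disagreement appears only if \<open>u\<close> falls
  between the acceptance probabilities \<open>logistic (dHam X\<^sup>+ e')\<close> and \<open>logistic (dHam X\<^sup>- e')\<close>.
  So the expected distance is \<open>1 - (1 - S) / card (pairs n)\<close>, where \<open>S\<close> is the sum of the gaps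
  between these probabilities over \<open>e' \<noteq> e\<close>, and it remains to bound \<open>S\<close> by \<open>1 - \<delta>\<close>.

  Since \<open>N\<^sub>G(Y, e') = 2 |E| n\<^bsup>|V| - 2\<^esup> r\<^sub>G(Y, e')\<^bsup>|E| - 1\<^esup>\<close>, every increment \<open>dHam Y e'\<close> is close to
  \<open>\<Psi>(p*)\<close>, where the logistic function \<open>\<sigma>\<close> has slope close to \<open>\<sigma>'(\<Psi>(p*))\<close>. The differences
  \<open>dHam X\<^sup>+ e' - dHam X\<^sup>- e'\<close> are weighted counts of embeddings through both \<open>e\<close> and \<open>e'\<close>;
  deleting the edge sent onto \<open>e'\<close> leaves an embedding through \<open>e\<close> of a graph with one edge
  fewer, so these differences sum to at most \<open>\<Psi>'(p* + \<epsilon>)\<close>. Hence \<open>S\<close> is at most about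
  \<open>\<sigma>'(\<Psi>(p*)) \<Psi>'(p*) = \<phi>'(p*) < 1\<close>.
\<close>

section \<open>Pairs and embedding counts\<close>

lemma pairsE:
  assumes "e \<in> pairs n"
  obtains x y where "x \<in> {1..n}" "y \<in> {1..n}" "x \<noteq> y" "e = {x, y}"
  using assms unfolding pairs_def by blast

lemma pairs_subset: "ed \<in> pairs m \<Longrightarrow> ed \<subseteq> {1..m}"
  by (auto simp: pairs_def)

lemma two_le_of_mem_pairs: "c \<in> pairs m \<Longrightarrow> 2 \<le> m"
  by (auto simp: pairs_def)

lemma finite_pairs [simp]: "finite (pairs n)"
  by (rule finite_subset[of _ "Pow {1..n}"]) (auto simp: pairs_def)

lemma card_pairs_le: "card (pairs n) \<le> n ^ 2"
proof -
  have "pairs n \<subseteq> (\<lambda>(i, j). {i, j}) ` ({1..n} \<times> {1..n})"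
    unfolding pairs_def by auto
  then have "card (pairs n) \<le> card ((\<lambda>(i, j). {i, j}) ` ({1..n} \<times> {1..n}))"
    by (intro card_mono) auto
  also have "\<dots> \<le> card ({1..n} \<times> {1..n})"
    by (rule card_image_le) simp
  finally show ?thesis
    by (simp add: power2_eq_square)
qed

lemma finite_edges: "is_graph G \<Longrightarrow> finite (snd G)"
  unfolding is_graph_def using finite_pairs finite_subset by blast

definition embs_through :: "nat \<Rightarrow> pgraph \<Rightarrow> nat set set \<Rightarrow> nat set \<Rightarrow> (nat \<Rightarrow> nat) set" where
  "embs_through n G X e = {\<sigma> \<in> {1..fst G} \<rightarrow>\<^sub>E {1..n}. inj_on \<sigma> {1..fst G} \<and>
     (\<forall>ed\<in>snd G. \<sigma> ` ed \<in> X \<union> {e}) \<and> (\<exists>ed\<in>snd G. \<sigma> ` ed = e)}"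

lemma Ncount_e_eq_card: "Ncount_e n G X e = card (embs_through n G X e)"
  by (simp add: Ncount_e_def embs_through_def)

lemma finite_embs_through [simp]: "finite (embs_through n G X e)"
  unfolding embs_through_def
  by (rule finite_subset[of _ "{1..fst G} \<rightarrow>\<^sub>E {1..n}"]) (auto intro: finite_PiE)

lemma embs_through_mono: "Xm \<subseteq> Xp \<Longrightarrow> embs_through n G Xm e \<subseteq> embs_through n G Xp e"
  unfolding embs_through_def by blast

lemma Ncount_e_mono: "Xm \<subseteq> Xp \<Longrightarrow> Ncount_e n G Xm e \<le> Ncount_e n G Xp e"
  unfolding Ncount_e_eq_card by (intro card_mono embs_through_mono) simp_all

lemma Ncount_e_no_edges: "snd G = {} \<Longrightarrow> Ncount_e n G Y e = 0"
  unfolding Ncount_e_def by simp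

lemma Ncount_insert: "Ncount n G (insert e Y) = Ncount n G (Y - {e}) + Ncount_e n G Y e"
proof -
  let ?P = "{1..fst G} \<rightarrow>\<^sub>E {1..n}"
  let ?A = "{\<sigma> \<in> ?P. inj_on \<sigma> {1..fst G} \<and> (\<forall>ed\<in>snd G. \<sigma> ` ed \<in> insert e Y)}"
  let ?B = "{\<sigma> \<in> ?P. inj_on \<sigma> {1..fst G} \<and> (\<forall>ed\<in>snd G. \<sigma> ` ed \<in> Y - {e})}"
  have "?A = ?B \<union> embs_through n G Y e"
  proof (rule set_eqI)
    fix \<sigma>
    show "\<sigma> \<in> ?A \<longleftrightarrow> \<sigma> \<in> ?B \<union> embs_through n G Y e"
    proof
      assume A: "\<sigma> \<in> ?A"
      show "\<sigma> \<in> ?B \<union> embs_through n G Y e"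
      proof (cases "\<forall>ed\<in>snd G. \<sigma> ` ed \<in> Y - {e}")
        case True
        then show ?thesis using A by simp
      next
        case False
        then obtain ed where ed: "ed \<in> snd G" "\<sigma> ` ed \<notin> Y - {e}"
          by blast
        moreover have "\<sigma> ` ed \<in> insert e Y"
          using A ed(1) by simp
        ultimately show ?thesis
          using A unfolding embs_through_def by auto
      qed
    qed (auto simp: embs_through_def)
  qed
  moreover have "?B \<inter> embs_through n G Y e = {}"
    unfolding embs_through_def by auto
  moreover have "finite ?B"
    by (rule finite_subset[of _ ?P]) (auto intro: finite_PiE)
  ultimately have "card ?A = card ?B + card (embs_through n G Y e)"
    by (simp add: card_Un_disjoint)
  then show ?thesis
    by (simp add: Ncount_def Ncount_e_eq_card)
qed

text \<open>An embedding through \<open>e'\<close> that needs the extra pair \<open>e\<close> of \<open>Xp\<close> sends some edge \<open>a\<close>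
  onto \<open>e\<close> and another edge \<open>b\<close> onto \<open>e'\<close>; deleting \<open>b\<close> from \<open>G\<close> leaves an embedding through \<open>e\<close>.\<close>

lemma embs_through_diff_subset:
  assumes G: "is_graph G" and X: "Xp - Xm = {e}" and "e' \<noteq> e"
  shows "embs_through n G Xp e' - embs_through n G Xm e'
      \<subseteq> (\<Union>b\<in>snd G. {\<sigma> \<in> embs_through n (fst G, snd G - {b}) Xp e. \<sigma> ` b = e'})"
proof
  fix \<sigma> assume "\<sigma> \<in> embs_through n G Xp e' - embs_through n G Xm e'"
  then have in_Xp: "\<sigma> \<in> embs_through n G Xp e'" and notin_Xm: "\<sigma> \<notin> embs_through n G Xm e'"
    by simp_all
  from in_Xp have P: "\<sigma> \<in> {1..fst G} \<rightarrow>\<^sub>E {1..n}" and inj: "inj_on \<sigma> {1..fst G}"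
    and into: "\<forall>ed\<in>snd G. \<sigma> ` ed \<in> Xp \<union> {e'}" and onto: "\<exists>ed\<in>snd G. \<sigma> ` ed = e'"
    unfolding embs_through_def mem_Collect_eq by simp_all
  from onto obtain b where b: "b \<in> snd G" "\<sigma> ` b = e'"
    by blast
  from notin_Xm P inj onto have "\<not> (\<forall>ed\<in>snd G. \<sigma> ` ed \<in> Xm \<union> {e'})"
    unfolding embs_through_def mem_Collect_eq by (simp only: simp_thms)
  then obtain a where a: "a \<in> snd G" "\<sigma> ` a \<notin> Xm \<union> {e'}"
    by blast
  have "\<sigma> ` a \<in> Xp - Xm"
    using a into by blast
  then have ae: "\<sigma> ` a = e"
    using X by simp
  have edges_sub: "ed \<in> snd G \<Longrightarrow> ed \<subseteq> {1..fst G}" for ed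
    using G pairs_subset unfolding is_graph_def by blast
  have "\<sigma> ` c \<in> Xp \<union> {e}" if c: "c \<in> snd G - {b}" for c
  proof -
    have "\<sigma> ` c \<noteq> \<sigma> ` b"
      using c b(1) inj_on_image_eq_iff[OF inj edges_sub[of c] edges_sub[of b]] by simp
    then show ?thesis
      using into c b by blast
  qed
  moreover have "\<exists>ed\<in>snd G - {b}. \<sigma> ` ed = e"
    using a(1) b(2) ae \<open>e' \<noteq> e\<close> by blast
  ultimately have "\<sigma> \<in> embs_through n (fst G, snd G - {b}) Xp e"
    using P inj unfolding embs_through_def by simp
  with b show "\<sigma> \<in> (\<Union>b\<in>snd G. {\<sigma> \<in> embs_through n (fst G, snd G - {b}) Xp e. \<sigma> ` b = e'})"
    by blast
qed

lemma sum_Ncount_e_diff_le: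
  assumes G: "is_graph G" and X: "Xm \<subseteq> Xp" "Xp - Xm = {e}"
  shows "(\<Sum>e'\<in>pairs n - {e}. Ncount_e n G Xp e' - Ncount_e n G Xm e')
      \<le> (\<Sum>b\<in>snd G. Ncount_e n (fst G, snd G - {b}) Xp e)"
proof -
  have finE: "finite (snd G)"
    using G by (rule finite_edges)
  let ?U = "\<lambda>b. embs_through n (fst G, snd G - {b}) Xp e"
  have "Ncount_e n G Xp e' - Ncount_e n G Xm e'
      \<le> (\<Sum>b\<in>snd G. card {\<sigma> \<in> ?U b. \<sigma> ` b = e'})" if "e' \<in> pairs n - {e}" for e'
  proof -
    have "Ncount_e n G Xp e' - Ncount_e n G Xm e'
        = card (embs_through n G Xp e' - embs_through n G Xm e')"
      unfolding Ncount_e_eq_card by (simp add: card_Diff_subset embs_through_mono[OF X(1)])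
    also have "\<dots> \<le> card (\<Union>b\<in>snd G. {\<sigma> \<in> ?U b. \<sigma> ` b = e'})"
      using that by (intro card_mono embs_through_diff_subset[OF G X(2)]) (simp_all add: finE)
    also have "\<dots> \<le> (\<Sum>b\<in>snd G. card {\<sigma> \<in> ?U b. \<sigma> ` b = e'})"
      by (rule card_UN_le[OF finE])
    finally show ?thesis .
  qed
  then have "(\<Sum>e'\<in>pairs n - {e}. Ncount_e n G Xp e' - Ncount_e n G Xm e')
      \<le> (\<Sum>e'\<in>pairs n - {e}. \<Sum>b\<in>snd G. card {\<sigma> \<in> ?U b. \<sigma> ` b = e'})"
    by (rule sum_mono)
  also have "\<dots> = (\<Sum>b\<in>snd G. \<Sum>e'\<in>pairs n - {e}. card {\<sigma> \<in> ?U b. \<sigma> ` b = e'})"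
    by (rule sum.swap)
  also have "\<dots> \<le> (\<Sum>b\<in>snd G. card (?U b))"
  proof (rule sum_mono)
    fix b
    have "(\<Sum>e'\<in>pairs n - {e}. card {\<sigma> \<in> ?U b. \<sigma> ` b = e'})
        = card (\<Union>e'\<in>pairs n - {e}. {\<sigma> \<in> ?U b. \<sigma> ` b = e'})"
      by (rule card_UN_disjoint[symmetric]) auto
    also have "\<dots> \<le> card (?U b)"
      by (rule card_mono) auto
    finally show "(\<Sum>e'\<in>pairs n - {e}. card {\<sigma> \<in> ?U b. \<sigma> ` b = e'}) \<le> card (?U b)" .
  qed
  finally show ?thesis
    by (simp add: Ncount_e_eq_card)
qed

lemma Ncount_e_single_edge:
  "Ncount_e n (m, {c}) Y e = card {\<sigma> \<in> {1..m} \<rightarrow>\<^sub>E {1..n}. inj_on \<sigma> {1..m} \<and> \<sigma> ` c = e}"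
  unfolding Ncount_e_def by (rule arg_cong[where f = card]) auto

lemma card_PiE_fix_two:
  assumes "i \<in> {1..m}" "j \<in> {1..m}" "i \<noteq> j"
  shows "card (PiE {1..m} (\<lambda>k. if k = i then {u} else if k = j then {v} else {1..n})) = n ^ (m - 2)"
proof -
  have "card (PiE {1..m} (\<lambda>k. if k = i then {u} else if k = j then {v} else {1..n}))
      = (\<Prod>k\<in>{1..m}. if k \<in> {i, j} then 1 else n)"
    by (subst card_PiE) (auto intro: prod.cong)
  also have "\<dots> = n ^ card ({1..m} \<inter> - {k. k \<in> {i, j}})"
    by (simp add: prod.If_cases)
  also have "{1..m} \<inter> - {k. k \<in> {i, j}} = {1..m} - {i, j}"
    by auto
  also have "card ({1..m} - {i, j}) = m - 2"
    using assms by (subst card_Diff_subset) auto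
  finally show ?thesis .
qed

lemma Ncount_e_single_edge_le:
  assumes c: "c \<in> pairs m" and e: "e \<in> pairs n"
  shows "Ncount_e n (m, {c}) Y e \<le> 2 * n ^ (m - 2)"
proof -
  obtain i j where ij: "i \<in> {1..m}" "j \<in> {1..m}" "i \<noteq> j" "c = {i, j}"
    using c by (rule pairsE)
  obtain x y where xy: "x \<in> {1..n}" "y \<in> {1..n}" "x \<noteq> y" "e = {x, y}"
    using e by (rule pairsE)
  define F where "F u v = PiE {1..m} (\<lambda>k. if k = i then {u} else if k = j then {v} else {1..n})" for u v
  have "{\<sigma> \<in> {1..m} \<rightarrow>\<^sub>E {1..n}. inj_on \<sigma> {1..m} \<and> \<sigma> ` c = e} \<subseteq> F x y \<union> F y x"
  proof
    fix \<sigma> assume "\<sigma> \<in> {\<sigma> \<in> {1..m} \<rightarrow>\<^sub>E {1..n}. inj_on \<sigma> {1..m} \<and> \<sigma> ` c = e}"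
    then have P: "\<sigma> \<in> {1..m} \<rightarrow>\<^sub>E {1..n}" and "\<sigma> ` c = e"
      by simp_all
    then have "{\<sigma> i, \<sigma> j} = {x, y}"
      using ij xy by simp
    then have "(\<sigma> i = x \<and> \<sigma> j = y) \<or> (\<sigma> i = y \<and> \<sigma> j = x)"
      by (simp add: doubleton_eq_iff)
    moreover have "\<sigma> \<in> F u v" if "\<sigma> i = u" "\<sigma> j = v" for u v
    proof -
      have "\<sigma> \<in> extensional {1..m}" "\<forall>k\<in>{1..m}. \<sigma> k \<in> {1..n}"
        using P by (simp_all add: PiE_iff)
      then show ?thesis
        unfolding F_def PiE_iff using that by auto
    qed
    ultimately show "\<sigma> \<in> F x y \<union> F y x"
      by blast
  qed
  then have "Ncount_e n (m, {c}) Y e \<le> card (F x y \<union> F y x)"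
    unfolding Ncount_e_single_edge F_def by (intro card_mono finite_UnI finite_PiE) auto
  also have "\<dots> \<le> card (F x y) + card (F y x)"
    by (rule card_Un_le)
  also have "\<dots> = 2 * n ^ (m - 2)"
    unfolding F_def using card_PiE_fix_two[OF ij(1-3)] by simp
  finally show ?thesis .
qed

lemma card_inj_funcset_ge:
  assumes "finite A" "finite C"
  shows "(card C - card A) ^ card A \<le> card {\<tau> \<in> A \<rightarrow>\<^sub>E C. inj_on \<tau> A}"
proof -
  have "(card C - card A) ^ card A = (\<Prod>t\<in>{0..<card A}. card C - card A)"
    by simp
  also have "\<dots> \<le> prod ((-) (card C)) {0..<card A}"
    by (rule prod_mono) auto
  also have "\<dots> = card {\<tau> \<in> A \<rightarrow>\<^sub>E C. inj_on \<tau> A}"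
    using card_inj_on_subset_funcset[of A C A] assms by simp
  finally show ?thesis .
qed

lemma fun_upd_pair_embedding:
  assumes \<tau>: "\<tau> \<in> ({1..m} - {i, j}) \<rightarrow>\<^sub>E ({1..n} - {u, v})" "inj_on \<tau> ({1..m} - {i, j})"
    and ij: "i \<in> {1..m}" "j \<in> {1..m}" "i \<noteq> j" and uv: "u \<in> {1..n}" "v \<in> {1..n}" "u \<noteq> v"
  shows "\<tau>(i := u, j := v) \<in> {\<sigma> \<in> {1..m} \<rightarrow>\<^sub>E {1..n}. inj_on \<sigma> {1..m} \<and> \<sigma> ` {i, j} = {u, v}}"
proof -
  let ?\<sigma> = "\<tau>(i := u, j := v)" and ?A = "{1..m} - {i, j}"
  have \<tau>_range: "\<tau> k \<in> {1..n}" "\<tau> k \<noteq> u" "\<tau> k \<noteq> v" if "k \<in> ?A" for k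
    using PiE_mem[OF \<tau>(1) that] by simp_all
  have \<tau>_undefined: "\<tau> k = undefined" if "k \<notin> ?A" for k
    using \<tau>(1) that by (simp add: PiE_def extensional_def)
  have "?\<sigma> k \<in> {1..n}" if "k \<in> {1..m}" for k
    using \<tau>_range(1)[of k] uv that by (cases "k = i"; cases "k = j") auto
  moreover have "?\<sigma> k = undefined" if "k \<notin> {1..m}" for k
    using \<tau>_undefined[of k] ij that by auto
  ultimately have "?\<sigma> \<in> {1..m} \<rightarrow>\<^sub>E {1..n}"
    by (simp add: PiE_iff extensional_def)
  moreover have "inj_on ?\<sigma> {1..m}"
  proof (rule inj_onI)
    fix a b assume a: "a \<in> {1..m}" and b: "b \<in> {1..m}" and eq: "?\<sigma> a = ?\<sigma> b"
    have cases: "(k = i \<and> ?\<sigma> k = u) \<or> (k = j \<and> ?\<sigma> k = v) \<or> (k \<in> ?A \<and> ?\<sigma> k = \<tau> k)"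
      if "k \<in> {1..m}" for k
      using that ij by auto
    from cases[OF a] cases[OF b] eq \<tau>_range(2,3) uv(3) ij(3) show "a = b"
      using inj_onD[OF \<tau>(2)] by metis
  qed
  moreover have "?\<sigma> ` {i, j} = {u, v}"
    using ij(3) by auto
  ultimately show ?thesis
    by (simp only: mem_Collect_eq)
qed

lemma inj_on_fun_upd_pair:
  assumes "i \<notin> A" "j \<notin> A"
  shows "inj_on (\<lambda>\<tau>. \<tau>(i := u, j := v)) (A \<rightarrow>\<^sub>E C)"
proof (rule inj_onI)
  fix \<tau> \<tau>' assume \<tau>: "\<tau> \<in> A \<rightarrow>\<^sub>E C" "\<tau>' \<in> A \<rightarrow>\<^sub>E C" and eq: "\<tau>(i := u, j := v) = \<tau>'(i := u, j := v)"
  show "\<tau> = \<tau>'"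
  proof
    fix k
    show "\<tau> k = \<tau>' k"
    proof (cases "k = i \<or> k = j")
      case True
      then have "k \<notin> A"
        using assms by auto
      then show ?thesis
        using \<tau> by (simp add: PiE_def extensional_def)
    next
      case False
      then show ?thesis
        using fun_cong[OF eq, of k] by simp
    qed
  qed
qed

text \<open>Every injection of the remaining \<open>m - 2\<close> vertices into the remaining \<open>n - 2\<close> vertices
  extends in two ways (one per orientation of \<open>e\<close>) to an embedding mapping \<open>c\<close> onto \<open>e\<close>.\<close>

lemma Ncount_e_single_edge_ge:
  assumes c: "c \<in> pairs m" and e: "e \<in> pairs n"
  shows "2 * (n - m) ^ (m - 2) \<le> Ncount_e n (m, {c}) Y e"
proof -
  obtain i j where ij: "i \<in> {1..m}" "j \<in> {1..m}" "i \<noteq> j" "c = {i, j}"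
    using c by (rule pairsE)
  obtain x y where xy: "x \<in> {1..n}" "y \<in> {1..n}" "x \<noteq> y" "e = {x, y}"
    using e by (rule pairsE)
  define A where "A = {1..m} - {i, j}"
  define T where "T = {\<tau> \<in> A \<rightarrow>\<^sub>E {1..n} - {x, y}. inj_on \<tau> A}"
  define S where "S = {\<sigma> \<in> {1..m} \<rightarrow>\<^sub>E {1..n}. inj_on \<sigma> {1..m} \<and> \<sigma> ` c = e}"
  define ext where "ext u v \<tau> = \<tau>(i := u, j := v)" for u v and \<tau> :: "nat \<Rightarrow> nat"
  have "card A = m - 2" "card ({1..n} - {x, y}) = n - 2"
    unfolding A_def using ij xy by (subst card_Diff_subset; auto)+
  moreover have "n - m = n - 2 - (m - 2)"
    using two_le_of_mem_pairs[OF c] by arith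
  ultimately have cardT: "(n - m) ^ (m - 2) \<le> card T"
    using card_inj_funcset_ge[of A "{1..n} - {x, y}"] unfolding T_def A_def by simp
  have finT: "finite T"
    unfolding T_def by (rule finite_subset[of _ "A \<rightarrow>\<^sub>E {1..n} - {x, y}"]) (auto simp: A_def intro: finite_PiE)
  have ext_S: "ext u v \<tau> \<in> S" if "\<tau> \<in> T" "{u, v} = {x, y}" "u \<noteq> v" for u v \<tau>
  proof -
    have "u \<in> {1..n}" "v \<in> {1..n}"
      using that(2) xy by (auto simp: doubleton_eq_iff)
    then have "ext u v \<tau> ` {i, j} = {u, v}"
      using fun_upd_pair_embedding[of \<tau> m i j n u v] that ij unfolding T_def A_def ext_def by simp
    moreover have "ext u v \<tau> \<in> {1..m} \<rightarrow>\<^sub>E {1..n}" "inj_on (ext u v \<tau>) {1..m}"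
      using fun_upd_pair_embedding[of \<tau> m i j n u v] \<open>u \<in> {1..n}\<close> \<open>v \<in> {1..n}\<close> that ij
      unfolding T_def A_def ext_def by simp_all
    ultimately show ?thesis
      unfolding S_def using ij(4) xy(4) that(2) by simp
  qed
  have inj_ext: "inj_on (ext u v) T" for u v
    unfolding ext_def T_def
    by (rule inj_on_subset[OF inj_on_fun_upd_pair[of i A j]]) (auto simp: A_def)
  have "ext x y ` T \<inter> ext y x ` T = {}"
    using xy(3) unfolding ext_def by (auto dest: fun_cong[where x = j])
  then have "2 * card T = card (ext x y ` T \<union> ext y x ` T)"
    using finT by (simp add: card_Un_disjoint card_image[OF inj_ext])
  also have "\<dots> \<le> card S"
  proof (rule card_mono)
    show "finite S"
      unfolding S_def by (rule finite_subset[of _ "{1..m} \<rightarrow>\<^sub>E {1..n}"]) (auto intro: finite_PiE)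
    show "ext x y ` T \<union> ext y x ` T \<subseteq> S"
      using ext_S xy(3) by (auto simp: insert_commute)
  qed
  finally show ?thesis
    using cardT unfolding Ncount_e_single_edge S_def by linarith
qed

section \<open>Embedding counts and the densities r_G\<close>

lemma powr_eq_power_minus_two:
  assumes "0 < n" "2 \<le> m"
  shows "real n powr (real m - 2) = real n ^ (m - 2)"
  using assms by (subst powr_realpow[symmetric]) (auto simp: of_nat_diff)

lemma rG_nonneg: "0 \<le> rG n G Y e"
  unfolding rG_def by simp

lemma Ncount_e_eq_rG_power:
  assumes k: "2 \<le> card (snd G)" and n: "0 < n"
  shows "real (Ncount_e n G Y e) = 2 * real (card (snd G)) * real n powr (real (fst G) - 2)
           * rG n G Y e ^ (card (snd G) - 1)"
proof -
  define k where "k = card (snd G)"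
  define c where "c = 2 * real k * real n powr (real (fst G) - 2)"
  define x where "x = real (Ncount_e n G Y e) / c"
  have "c > 0"
    using k n unfolding c_def k_def by simp
  then have N: "real (Ncount_e n G Y e) = c * x"
    unfolding x_def by simp
  have "x \<ge> 0"
    unfolding x_def using \<open>c > 0\<close> by simp
  have "(x powr (1 / (real k - 1))) ^ (k - 1) = x"
  proof (cases "x = 0")
    case True
    then show ?thesis
      using k unfolding k_def by simp
  next
    case False
    then have "x > 0"
      using \<open>x \<ge> 0\<close> by simp
    then have "(x powr (1 / (real k - 1))) ^ (k - 1) = x powr (1 / (real k - 1) * real (k - 1))"
      by (simp add: powr_realpow[symmetric] powr_powr)
    also have "1 / (real k - 1) * real (k - 1) = 1"
      using k unfolding k_def by (simp add: of_nat_diff)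
    finally show ?thesis
      using \<open>x > 0\<close> by simp
  qed
  moreover have "rG n G Y e = x powr (1 / (real k - 1))"
    unfolding rG_def x_def k_def c_def by simp
  ultimately show ?thesis
    using N unfolding k_def c_def by simp
qed

lemma Ncount_e_le_rG_bound:
  assumes G: "is_graph G" and n: "0 < n" and e: "e \<in> pairs n"
    and r: "2 \<le> card (snd G) \<Longrightarrow> rG n G Y e \<le> q" and q: "0 \<le> q"
  shows "real (Ncount_e n G Y e)
      \<le> 2 * real (card (snd G)) * real n powr (real (fst G) - 2) * q ^ (card (snd G) - 1)"
proof (cases "2 \<le> card (snd G)")
  case True
  have "0 \<le> 2 * real (card (snd G)) * real n powr (real (fst G) - 2)"
    by simp
  then show ?thesis
    using Ncount_e_eq_rG_power[OF True n] r[OF True] rG_nonneg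
    by (simp add: mult_left_mono power_mono)
next
  case False
  then consider "card (snd G) = 0" | "card (snd G) = 1"
    by linarith
  then show ?thesis
  proof cases
    case 1
    then show ?thesis
      using finite_edges[OF G] by (simp add: Ncount_e_no_edges)
  next
    case 2
    then obtain c where c: "snd G = {c}"
      by (rule card_1_singletonE)
    then have G_eq: "G = (fst G, {c})"
      by (simp add: prod_eq_iff)
    have cp: "c \<in> pairs (fst G)"
      using G c unfolding is_graph_def by auto
    have "Ncount_e n G Y e \<le> 2 * n ^ (fst G - 2)"
      using Ncount_e_single_edge_le[OF cp e, of Y] G_eq by simp
    then have "real (Ncount_e n G Y e) \<le> 2 * real n ^ (fst G - 2)"
      by (metis of_nat_le_iff of_nat_mult of_nat_numeral of_nat_power)
    then show ?thesis
      using 2 n two_le_of_mem_pairs[OF cp] by (simp add: powr_eq_power_minus_two)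
  qed
qed

lemma Bernoulli_power_diff_ge:
  assumes "0 < n" "m \<le> n" "real m * real m \<le> \<eta> * real n"
  shows "(1 - \<eta>) * real n ^ (m - 2) \<le> real (n - m) ^ (m - 2)"
proof -
  have n: "real n > 0"
    using assms by simp
  have "real (m - 2) * real m \<le> real m * real m"
    by (simp add: mult_right_mono)
  then have "1 - \<eta> \<le> 1 + real (m - 2) * (- real m / real n)"
    using assms(3) n by (simp add: field_simps)
  also have "\<dots> \<le> (1 + (- real m / real n)) ^ (m - 2)"
    using assms n by (intro Bernoulli_inequality) (simp add: field_simps)
  finally have "1 - \<eta> \<le> (1 + (- real m / real n)) ^ (m - 2)" .
  then have "real n ^ (m - 2) * (1 - \<eta>) \<le> real n ^ (m - 2) * (1 + (- real m / real n)) ^ (m - 2)"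
    using n by (intro mult_left_mono) auto
  also have "\<dots> = real (n - m) ^ (m - 2)"
    using assms n by (simp add: of_nat_diff power_mult_distrib[symmetric] field_simps)
  finally show ?thesis
    by (simp add: mult.commute)
qed

lemma power_diff_abs_le:
  fixes x y M :: real
  assumes "0 \<le> x" "x \<le> M" "0 \<le> y" "y \<le> M"
  shows "\<bar>x ^ j - y ^ j\<bar> \<le> real j * M ^ (j - 1) * \<bar>x - y\<bar>"
proof -
  have "\<bar>\<Sum>i<j. y ^ (j - Suc i) * x ^ i\<bar> = (\<Sum>i<j. y ^ (j - Suc i) * x ^ i)"
    using assms by (intro abs_of_nonneg sum_nonneg) auto
  also have "\<dots> \<le> (\<Sum>i<j. M ^ (j - Suc i) * M ^ i)"
    using assms by (intro sum_mono mult_mono power_mono) auto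
  also have "\<dots> = (\<Sum>i<j. M ^ (j - 1))"
    by (intro sum.cong refl) (simp flip: power_add)
  finally have "\<bar>\<Sum>i<j. y ^ (j - Suc i) * x ^ i\<bar> \<le> real j * M ^ (j - 1)"
    by simp
  then have "\<bar>x - y\<bar> * \<bar>\<Sum>i<j. y ^ (j - Suc i) * x ^ i\<bar> \<le> \<bar>x - y\<bar> * (real j * M ^ (j - 1))"
    by (rule mult_left_mono) simp
  then show ?thesis
    by (simp add: power_diff_sumr2 abs_mult mult_ac)
qed

lemma normalized_Ncount_e_single_edge_approx:
  fixes \<eta> :: real
  assumes c: "c \<in> pairs m" and e: "e \<in> pairs n"
    and n: "0 < n" "m \<le> n" "real m * real m \<le> \<eta> * real n"
  shows "\<bar>real (Ncount_e n (m, {c}) Y e) / real n powr (real m - 2) - 2\<bar> \<le> 2 * \<eta>"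
proof -
  define q where "q = real (Ncount_e n (m, {c}) Y e) / real n ^ (m - 2)"
  have pos: "0 < real n ^ (m - 2)"
    using n by simp
  have "Ncount_e n (m, {c}) Y e \<le> 2 * n ^ (m - 2)"
    using c e by (rule Ncount_e_single_edge_le)
  then have "q \<le> 2"
    unfolding q_def using pos by (simp add: divide_le_eq flip: of_nat_power)
  have "(1 - \<eta>) * real n ^ (m - 2) \<le> real (n - m) ^ (m - 2)"
    using n by (rule Bernoulli_power_diff_ge)
  moreover have "2 * (n - m) ^ (m - 2) \<le> Ncount_e n (m, {c}) Y e"
    using c e by (rule Ncount_e_single_edge_ge)
  then have "2 * real (n - m) ^ (m - 2) \<le> real (Ncount_e n (m, {c}) Y e)"
    by (metis of_nat_le_iff of_nat_mult of_nat_numeral of_nat_power)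
  ultimately have "2 * (1 - \<eta>) * real n ^ (m - 2) \<le> real (Ncount_e n (m, {c}) Y e)"
    by linarith
  then have "2 * (1 - \<eta>) \<le> q"
    unfolding q_def using pos by (simp add: le_divide_eq)
  with \<open>q \<le> 2\<close> show ?thesis
    using n(1) two_le_of_mem_pairs[OF c] unfolding q_def by (simp add: powr_eq_power_minus_two)
qed

lemma normalized_Ncount_e_rG_approx:
  fixes p \<epsilon> :: real
  assumes k: "card (snd G) = k" "2 \<le> k" and n: "0 < n"
    and r: "\<bar>rG n G Y e - p\<bar> < \<epsilon>" and "0 \<le> p" "\<epsilon> \<le> 1"
  shows "\<bar>real (Ncount_e n G Y e) / real n powr (real (fst G) - 2) - 2 * real k * p ^ (k - 1)\<bar>
      \<le> 2 * real k * real (k - 1) * (p + 1) ^ (k - 2) * \<epsilon>"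
proof -
  define r where "r = rG n G Y e"
  have "0 \<le> r" "r \<le> p + 1"
    using rG_nonneg r \<open>\<epsilon> \<le> 1\<close> unfolding r_def by (auto simp: abs_less_iff)
  then have "\<bar>r ^ (k - 1) - p ^ (k - 1)\<bar> \<le> real (k - 1) * (p + 1) ^ (k - 2) * \<bar>r - p\<bar>"
    using power_diff_abs_le[of r "p + 1" p "k - 1"] \<open>0 \<le> p\<close> by (simp add: numeral_2_eq_2)
  also have "\<dots> \<le> real (k - 1) * (p + 1) ^ (k - 2) * \<epsilon>"
    using r \<open>0 \<le> p\<close> unfolding r_def by (intro mult_left_mono) auto
  finally have bound: "2 * real k * \<bar>r ^ (k - 1) - p ^ (k - 1)\<bar>
      \<le> 2 * real k * (real (k - 1) * (p + 1) ^ (k - 2) * \<epsilon>)"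
    by (rule mult_left_mono) simp
  have "real (Ncount_e n G Y e) / real n powr (real (fst G) - 2) = 2 * real k * r ^ (k - 1)"
    using Ncount_e_eq_rG_power[of G n Y e] k n unfolding r_def by simp
  then have "\<bar>real (Ncount_e n G Y e) / real n powr (real (fst G) - 2) - 2 * real k * p ^ (k - 1)\<bar>
      = 2 * real k * \<bar>r ^ (k - 1) - p ^ (k - 1)\<bar>"
    by (simp add: abs_mult flip: right_diff_distrib)
  with bound show ?thesis
    by (simp add: mult_ac)
qed

lemma normalized_Ncount_e_approx:
  fixes p \<epsilon> \<eta> :: real
  assumes G: "is_graph G" "card (snd G) = k" and n: "0 < n" "fst G \<le> n"
    and m: "real (fst G) * real (fst G) \<le> \<eta> * real n" and e: "e \<in> pairs n"
    and r: "2 \<le> k \<Longrightarrow> \<bar>rG n G Y e - p\<bar> < \<epsilon>" and "0 \<le> \<eta>" "0 \<le> p" "0 \<le> \<epsilon>" "\<epsilon> \<le> 1"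
  shows "\<bar>real (Ncount_e n G Y e) / real n powr (real (fst G) - 2) - 2 * real k * p ^ (k - 1)\<bar>
      \<le> 2 * \<eta> + 2 * real k * real (k - 1) * (p + 1) ^ (k - 2) * \<epsilon>"
proof -
  consider "k = 0" | "k = 1" | "2 \<le> k"
    by linarith
  then show ?thesis
  proof cases
    case 1
    then show ?thesis
      using G finite_edges[OF G(1)] assms(8-) by (simp add: Ncount_e_no_edges)
  next
    case 2
    then have "card (snd G) = 1"
      using G(2) by simp
    then obtain c where c: "snd G = {c}"
      by (rule card_1_singletonE)
    then have "G = (fst G, {c})"
      by (simp add: prod_eq_iff)
    moreover have "c \<in> pairs (fst G)"
      using G(1) c unfolding is_graph_def by simp
    ultimately show ?thesis
      using normalized_Ncount_e_single_edge_approx[OF _ e n m, of c Y] 2 assms(10) by simp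
  next
    case 3
    then show ?thesis
      using normalized_Ncount_e_rG_approx[OF G(2) 3 n(1) r[OF 3]] assms(8-) by simp
  qed
qed

lemma sum_Ncount_e_diff_le_rG:
  fixes q :: real
  assumes G: "is_graph G" "fst G \<le> L" "card (snd G) = k" and n: "0 < n"
    and X: "Xm \<subseteq> Xp" "Xp - Xm = {e}" and e: "e \<in> pairs n"
    and r: "\<forall>G'\<in>HL L. rG n G' Xp e \<le> q" and "0 \<le> q"
  shows "(\<Sum>e'\<in>pairs n - {e}. real (Ncount_e n G Xp e') - real (Ncount_e n G Xm e'))
      \<le> 2 * real k * real (k - 1) * real n powr (real (fst G) - 2) * q ^ (k - 2)"
proof -
  have "(\<Sum>e'\<in>pairs n - {e}. real (Ncount_e n G Xp e') - real (Ncount_e n G Xm e'))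
      = real (\<Sum>e'\<in>pairs n - {e}. Ncount_e n G Xp e' - Ncount_e n G Xm e')"
    using Ncount_e_mono[OF X(1)] by (simp add: of_nat_diff)
  also have "\<dots> \<le> (\<Sum>b\<in>snd G. real (Ncount_e n (fst G, snd G - {b}) Xp e))"
    using sum_Ncount_e_diff_le[OF G(1) X] by (simp flip: of_nat_sum)
  also have "\<dots> \<le> (\<Sum>b\<in>snd G. 2 * real (k - 1) * real n powr (real (fst G) - 2) * q ^ (k - 2))"
  proof (rule sum_mono)
    fix b assume b: "b \<in> snd G"
    have card: "card (snd G - {b}) = k - 1"
      using b G finite_edges[OF G(1)] by simp
    have "is_graph (fst G, snd G - {b})"
      using G(1) unfolding is_graph_def by auto
    moreover have "rG n (fst G, snd G - {b}) Xp e \<le> q" if "2 \<le> k - 1"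
      using r \<open>is_graph (fst G, snd G - {b})\<close> G(2) card that unfolding HL_def by auto
    ultimately show "real (Ncount_e n (fst G, snd G - {b}) Xp e)
        \<le> 2 * real (k - 1) * real n powr (real (fst G) - 2) * q ^ (k - 2)"
      using Ncount_e_le_rG_bound[OF _ n e _ \<open>0 \<le> q\<close>, of "(fst G, snd G - {b})"] card
      by (simp add: numeral_2_eq_2)
  qed
  also have "\<dots> = 2 * real k * real (k - 1) * real n powr (real (fst G) - 2) * q ^ (k - 2)"
    using G(3) by simp
  finally show ?thesis .
qed

section \<open>Increments of the Hamiltonian\<close>

definition dHam ::
    "nat \<Rightarrow> (nat \<Rightarrow> pgraph) \<Rightarrow> (nat \<Rightarrow> real) \<Rightarrow> nat \<Rightarrow> nat set set \<Rightarrow> nat set \<Rightarrow> real" where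
  "dHam s Gs \<beta> n X e = Ham s Gs \<beta> n (insert e X) - Ham s Gs \<beta> n (X - {e})"

lemma dHam_eq:
  "dHam s Gs \<beta> n Y e
     = (\<Sum>i=1..s. \<beta> i * real (Ncount_e n (Gs i) Y e) / real n powr (real (fst (Gs i)) - 2))"
  unfolding dHam_def Ham_def sum_subtractf[symmetric]
  by (rule sum.cong) (simp_all add: Ncount_insert diff_divide_distrib[symmetric] algebra_simps)

definition dPsi :: "nat \<Rightarrow> (nat \<Rightarrow> pgraph) \<Rightarrow> (nat \<Rightarrow> real) \<Rightarrow> real \<Rightarrow> real" where
  "dPsi s Gs \<beta> p = (\<Sum>i=1..s. 2 * \<beta> i * real (card (snd (Gs i))) * real (card (snd (Gs i)) - 1)
                                * p ^ (card (snd (Gs i)) - 2))"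

lemma Psi_has_real_derivative: "(Psi s Gs \<beta> has_real_derivative dPsi s Gs \<beta> p) (at p)"
proof -
  have "(Psi s Gs \<beta> has_real_derivative (\<Sum>i=1..s. 2 * \<beta> i * real (card (snd (Gs i)))
      * (real (card (snd (Gs i)) - 1) * p ^ (card (snd (Gs i)) - 1 - Suc 0)))) (at p)"
    unfolding Psi_def[abs_def] by (intro DERIV_sum DERIV_cmult DERIV_pow)
  then show ?thesis
    by (simp add: dPsi_def numeral_2_eq_2 mult_ac)
qed

lemma isCont_dPsi: "isCont (dPsi s Gs \<beta>) p"
  unfolding dPsi_def[abs_def] by (intro continuous_intros)

lemma dPsi_abs_nonneg:
  fixes p :: real
  assumes "0 \<le> p"
  shows "0 \<le> dPsi s Gs (\<lambda>i. \<bar>\<beta> i\<bar>) p"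
  unfolding dPsi_def using assms by (intro sum_nonneg) simp

lemma dPsi_abs_eq:
  assumes "\<forall>i\<in>{1..s}. 2 \<le> card (snd (Gs i)) \<longrightarrow> 0 \<le> \<beta> i"
  shows "dPsi s Gs (\<lambda>i. \<bar>\<beta> i\<bar>) p = dPsi s Gs \<beta> p"
  unfolding dPsi_def
proof (rule sum.cong[OF refl])
  fix i assume "i \<in> {1..s}"
  then have "\<bar>\<beta> i\<bar> = \<beta> i \<or> card (snd (Gs i)) - 1 = 0"
    using assms by force
  then show "2 * \<bar>\<beta> i\<bar> * real (card (snd (Gs i))) * real (card (snd (Gs i)) - 1)
        * p ^ (card (snd (Gs i)) - 2)
      = 2 * \<beta> i * real (card (snd (Gs i))) * real (card (snd (Gs i)) - 1)
        * p ^ (card (snd (Gs i)) - 2)"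
    by auto
qed

lemma dHam_approx:
  fixes p \<epsilon> \<eta> :: real
  assumes graphs: "\<forall>i\<in>{1..s}. is_graph (Gs i) \<and> fst (Gs i) \<le> L"
    and n: "0 < n" "L \<le> n" "real L * real L \<le> \<eta> * real n" and e: "e \<in> pairs n"
    and r: "\<forall>G\<in>HL L. \<bar>rG n G Y e - p\<bar> < \<epsilon>" and "0 \<le> \<eta>" "0 \<le> p" "0 \<le> \<epsilon>" "\<epsilon> \<le> 1"
  shows "\<bar>dHam s Gs \<beta> n Y e - Psi s Gs \<beta> p\<bar>
      \<le> 2 * \<eta> * (\<Sum>i=1..s. \<bar>\<beta> i\<bar>) + \<epsilon> * dPsi s Gs (\<lambda>i. \<bar>\<beta> i\<bar>) (p + 1)"
proof -
  define k where "k i = card (snd (Gs i))" for i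
  have "\<bar>dHam s Gs \<beta> n Y e - Psi s Gs \<beta> p\<bar>
      = \<bar>\<Sum>i=1..s. \<beta> i * (real (Ncount_e n (Gs i) Y e) / real n powr (real (fst (Gs i)) - 2)
                         - 2 * real (k i) * p ^ (k i - 1))\<bar>"
    unfolding dHam_eq Psi_def k_def sum_subtractf[symmetric]
    by (simp add: right_diff_distrib mult_ac)
  also have "\<dots> \<le> (\<Sum>i=1..s. \<bar>\<beta> i\<bar> * (2 * \<eta> + 2 * real (k i) * real (k i - 1) * (p + 1) ^ (k i - 2) * \<epsilon>))"
  proof (rule order_trans[OF sum_abs sum_mono])
    fix i assume i: "i \<in> {1..s}"
    have Gi: "is_graph (Gs i)" "fst (Gs i) \<le> L"
      using graphs i by auto
    have "real (fst (Gs i)) * real (fst (Gs i)) \<le> real L * real L"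
      using Gi by (intro mult_mono) auto
    moreover have "\<bar>rG n (Gs i) Y e - p\<bar> < \<epsilon>" if "2 \<le> k i"
      using bspec[OF r, of "Gs i"] Gi that unfolding HL_def k_def by simp
    ultimately have "\<bar>real (Ncount_e n (Gs i) Y e) / real n powr (real (fst (Gs i)) - 2) - 2 * real (k i) * p ^ (k i - 1)\<bar>
        \<le> 2 * \<eta> + 2 * real (k i) * real (k i - 1) * (p + 1) ^ (k i - 2) * \<epsilon>"
      using Gi n assms(7-) unfolding k_def
      by (intro normalized_Ncount_e_approx[OF Gi(1) refl n(1) _ _ e]) auto
    then show "\<bar>\<beta> i * (real (Ncount_e n (Gs i) Y e) / real n powr (real (fst (Gs i)) - 2)
                         - 2 * real (k i) * p ^ (k i - 1))\<bar>
        \<le> \<bar>\<beta> i\<bar> * (2 * \<eta> + 2 * real (k i) * real (k i - 1) * (p + 1) ^ (k i - 2) * \<epsilon>)"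
      by (simp add: abs_mult mult_left_mono)
  qed
  also have "\<dots> = 2 * \<eta> * (\<Sum>i=1..s. \<bar>\<beta> i\<bar>) + \<epsilon> * dPsi s Gs (\<lambda>i. \<bar>\<beta> i\<bar>) (p + 1)"
    unfolding dPsi_def k_def by (simp add: sum_distrib_left sum.distrib algebra_simps)
  finally show ?thesis .
qed

lemma sum_dHam_diff_le:
  fixes q :: real
  assumes graphs: "\<forall>i\<in>{1..s}. is_graph (Gs i) \<and> fst (Gs i) \<le> L"
    and n: "0 < n" and X: "Xm \<subseteq> Xp" "Xp - Xm = {e}" and e: "e \<in> pairs n"
    and r: "\<forall>G\<in>HL L. rG n G Xp e \<le> q" and "0 \<le> q"
  shows "(\<Sum>e'\<in>pairs n - {e}. \<bar>dHam s Gs \<beta> n Xp e' - dHam s Gs \<beta> n Xm e'\<bar>)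
      \<le> dPsi s Gs (\<lambda>i. \<bar>\<beta> i\<bar>) q"
proof -
  define k where "k i = card (snd (Gs i))" for i
  define D where "D i e' = (real (Ncount_e n (Gs i) Xp e') - real (Ncount_e n (Gs i) Xm e'))
                              / real n powr (real (fst (Gs i)) - 2)" for i e'
  have D_nonneg: "0 \<le> D i e'" for i e'
    unfolding D_def using Ncount_e_mono[OF X(1)] by simp
  have "\<bar>dHam s Gs \<beta> n Xp e' - dHam s Gs \<beta> n Xm e'\<bar> \<le> (\<Sum>i=1..s. \<bar>\<beta> i\<bar> * D i e')" for e'
  proof -
    have "dHam s Gs \<beta> n Xp e' - dHam s Gs \<beta> n Xm e' = (\<Sum>i=1..s. \<beta> i * D i e')"
      unfolding dHam_eq D_def sum_subtractf[symmetric] by (simp add: diff_divide_distrib right_diff_distrib)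
    then show ?thesis
      using sum_abs[of "\<lambda>i. \<beta> i * D i e'" "{1..s}"] D_nonneg by (simp add: abs_mult)
  qed
  then have "(\<Sum>e'\<in>pairs n - {e}. \<bar>dHam s Gs \<beta> n Xp e' - dHam s Gs \<beta> n Xm e'\<bar>)
      \<le> (\<Sum>e'\<in>pairs n - {e}. \<Sum>i=1..s. \<bar>\<beta> i\<bar> * D i e')"
    by (rule sum_mono)
  also have "\<dots> = (\<Sum>i=1..s. \<bar>\<beta> i\<bar> * (\<Sum>e'\<in>pairs n - {e}. D i e'))"
    by (subst sum.swap) (simp add: sum_distrib_left)
  also have "\<dots> \<le> (\<Sum>i=1..s. \<bar>\<beta> i\<bar> * (2 * real (k i) * real (k i - 1) * q ^ (k i - 2)))"
  proof (rule sum_mono)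
    fix i assume i: "i \<in> {1..s}"
    have "(\<Sum>e'\<in>pairs n - {e}. real (Ncount_e n (Gs i) Xp e') - real (Ncount_e n (Gs i) Xm e'))
        \<le> 2 * real (k i) * real (k i - 1) * real n powr (real (fst (Gs i)) - 2) * q ^ (k i - 2)"
      using graphs i by (intro sum_Ncount_e_diff_le_rG[OF _ _ _ n X e r \<open>0 \<le> q\<close>]) (auto simp: k_def)
    then have "(\<Sum>e'\<in>pairs n - {e}. D i e') \<le> 2 * real (k i) * real (k i - 1) * q ^ (k i - 2)"
      unfolding D_def using n by (simp add: sum_divide_distrib[symmetric] divide_le_eq mult_ac)
    then show "\<bar>\<beta> i\<bar> * (\<Sum>e'\<in>pairs n - {e}. D i e') \<le> \<bar>\<beta> i\<bar> * (2 * real (k i) * real (k i - 1) * q ^ (k i - 2))"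
      by (rule mult_left_mono) simp
  qed
  also have "\<dots> = dPsi s Gs (\<lambda>i. \<bar>\<beta> i\<bar>) q"
    unfolding dPsi_def k_def by (simp add: mult_ac)
  finally show ?thesis .
qed

definition logistic :: "real \<Rightarrow> real" where
  "logistic x = exp x / (1 + exp x)"

definition logistic_deriv :: "real \<Rightarrow> real" where
  "logistic_deriv x = exp x / (1 + exp x)\<^sup>2"

lemma one_plus_exp_pos: "0 < 1 + exp (x :: real)"
  by (simp add: add_pos_pos)

lemma logistic_has_real_derivative: "(logistic has_real_derivative logistic_deriv x) (at x)"
proof -
  have "(logistic has_real_derivative
      (exp x * (1 + exp x) - exp x * exp x) / ((1 + exp x) * (1 + exp x))) (at x)"
    unfolding logistic_def[abs_def] using one_plus_exp_pos[of x]
    by (intro DERIV_divide derivative_eq_intros) auto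
  then show ?thesis
    by (simp add: logistic_deriv_def power2_eq_square algebra_simps)
qed

lemma logistic_deriv_pos: "0 < logistic_deriv x"
  unfolding logistic_deriv_def using one_plus_exp_pos[of x] by simp

lemma isCont_logistic_deriv: "isCont logistic_deriv x"
proof -
  have "(1 + exp x)\<^sup>2 \<noteq> 0"
    using one_plus_exp_pos[of x] by simp
  then show ?thesis
    unfolding logistic_deriv_def[abs_def] by (intro continuous_intros)
qed

lemma logistic_lipschitz_on_ball:
  assumes "\<forall>z\<in>ball c \<rho>. logistic_deriv z \<le> A" "x \<in> ball c \<rho>" "y \<in> ball c \<rho>"
  shows "\<bar>logistic x - logistic y\<bar> \<le> A * \<bar>x - y\<bar>"
  using field_differentiable_bound[of "ball c \<rho>" logistic logistic_deriv A x y] assms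
    logistic_has_real_derivative logistic_deriv_pos
  by (auto intro: has_field_derivative_at_within simp: less_imp_le)

lemma phi_eq_logistic: "phi s Gs \<beta> p = logistic (Psi s Gs \<beta> p)"
  by (simp add: phi_def logistic_def)

lemma deriv_phi: "deriv (phi s Gs \<beta>) p = logistic_deriv (Psi s Gs \<beta> p) * dPsi s Gs \<beta> p"
proof (rule DERIV_imp_deriv)
  show "(phi s Gs \<beta> has_real_derivative logistic_deriv (Psi s Gs \<beta> p) * dPsi s Gs \<beta> p) (at p)"
    unfolding phi_eq_logistic[abs_def]
    by (rule DERIV_chain2[OF logistic_has_real_derivative Psi_has_real_derivative])
qed

section \<open>The monotone coupling\<close>

lemma glauber_step_eq:
  "glauber_step s Gs \<beta> n X e u
     = (if u \<le> logistic (dHam s Gs \<beta> n X e) then insert e X else X - {e})"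
  by (simp add: glauber_step_def logistic_def dHam_def Let_def)

lemma hamming_updates_le:
  assumes "Xm \<subseteq> Xp" "Xp - Xm = {e}" "e' \<noteq> e"
  shows "real (hamming (if P then insert e' Xp else Xp - {e'}) (if Q then insert e' Xm else Xm - {e'}))
      \<le> 1 + (if P = Q then 0 else 1)"
proof -
  let ?A = "if P then insert e' Xp else Xp - {e'}" and ?B = "if Q then insert e' Xm else Xm - {e'}"
  have X: "Xp = insert e Xm" "e \<notin> Xm"
    using assms by blast+
  have "(?A - ?B) \<union> (?B - ?A) \<subseteq> {e, e'}"
    using X assms(3) by (cases P; cases Q) auto
  then have "hamming ?A ?B \<le> card {e, e'}"
    unfolding hamming_def by (intro card_mono) auto
  also have "card {e, e'} = 2"
    using assms(3) by simp
  finally have "hamming ?A ?B \<le> 2" .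
  moreover have "hamming ?A ?B = 1" if "P = Q"
  proof -
    have "(?A - ?B) \<union> (?B - ?A) = {e}"
      using X that assms(3) by (cases P) auto
    then show ?thesis
      unfolding hamming_def by simp
  qed
  ultimately show ?thesis
    by auto
qed

lemma integral_uniform_01_le:
  fixes f :: "real \<Rightarrow> real"
  assumes f: "\<And>u. f u \<le> 1 + indicator {min a b<..max a b} u"
  shows "integral\<^sup>L (uniform_measure lborel {0..1}) f \<le> 1 + \<bar>a - b\<bar>"
proof (cases "integrable (uniform_measure lborel {0..1}) f")
  case True
  interpret prob_space "uniform_measure lborel {0..1::real}"
    by (rule prob_space_uniform_measure) auto
  let ?I = "{min a b<..max a b}"
  have ind: "integrable (uniform_measure lborel {0..1}) (indicator ?I :: real \<Rightarrow> real)"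
    using emeasure_finite[of ?I]
    by (intro integrable_real_indicator) (auto simp: less_top[symmetric] simp del: emeasure_uniform_measure)
  have "integral\<^sup>L (uniform_measure lborel {0..1}) f
      \<le> integral\<^sup>L (uniform_measure lborel {0..1}) (\<lambda>u. 1 + indicator ?I u)"
    using ind by (intro integral_mono True f Bochner_Integration.integrable_add) auto
  also have "\<dots> = 1 + measure (uniform_measure lborel {0..1}) ?I"
    using ind prob_space by (subst Bochner_Integration.integral_add) (auto simp del: measure_uniform_measure)
  also have "measure (uniform_measure lborel {0..1}) ?I = measure lborel ({0..1} \<inter> ?I)"
    by (subst measure_uniform_measure) auto
  also have "\<dots> \<le> measure lborel ?I"
    by (intro measure_mono_fmeasurable) (auto simp: fmeasurable_def)
  also have "\<dots> = \<bar>a - b\<bar>"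
    by (simp add: max_def min_def)
  finally show ?thesis
    by simp
next
  case False
  then show ?thesis
    by (simp add: not_integrable_integral_eq)
qed

lemma coupled_integral_le:
  assumes "Xm \<subseteq> Xp" "Xp - Xm = {e}" "e' \<noteq> e"
  shows "integral\<^sup>L (uniform_measure lborel {0..1})
           (\<lambda>u. real (hamming (glauber_step s Gs \<beta> n Xp e' u) (glauber_step s Gs \<beta> n Xm e' u)))
      \<le> 1 + \<bar>logistic (dHam s Gs \<beta> n Xp e') - logistic (dHam s Gs \<beta> n Xm e')\<bar>"
proof (rule integral_uniform_01_le)
  fix u
  let ?a = "logistic (dHam s Gs \<beta> n Xp e')" and ?b = "logistic (dHam s Gs \<beta> n Xm e')"
  have "(u \<le> ?a) \<noteq> (u \<le> ?b) \<longleftrightarrow> u \<in> {min ?a ?b<..max ?a ?b}"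
    by auto
  then show "real (hamming (glauber_step s Gs \<beta> n Xp e' u) (glauber_step s Gs \<beta> n Xm e' u))
      \<le> 1 + indicator {min ?a ?b<..max ?a ?b} u"
    using hamming_updates_le[OF assms, of "u \<le> ?a" "u \<le> ?b"]
    unfolding glauber_step_eq by (auto simp: indicator_def split: if_splits)
qed

lemma coupled_exp_dist_le:
  assumes X: "Xm \<subseteq> Xp" "Xp - Xm = {e}" and e: "e \<in> pairs n" and "0 \<le> \<delta>"
    and contraction:
      "(\<Sum>e'\<in>pairs n - {e}. \<bar>logistic (dHam s Gs \<beta> n Xp e') - logistic (dHam s Gs \<beta> n Xm e')\<bar>) \<le> 1 - \<delta>"
  shows "coupled_exp_dist s Gs \<beta> n Xp Xm \<le> 1 - \<delta> / real n ^ 2"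
proof -
  define g where "g e' = integral\<^sup>L (uniform_measure lborel {0..1})
      (\<lambda>u. real (hamming (glauber_step s Gs \<beta> n Xp e' u) (glauber_step s Gs \<beta> n Xm e' u)))" for e'
  define P where "P = card (pairs n)"
  have "P > 0"
    unfolding P_def using e by (auto simp: card_gt_0_iff)
  have "Xp = insert e Xm"
    using X by blast
  have "g e = 0"
    unfolding g_def \<open>Xp = insert e Xm\<close> glauber_step_def by (simp add: hamming_def Let_def cong: if_cong)
  then have "(\<Sum>e'\<in>pairs n. g e') = (\<Sum>e'\<in>pairs n - {e}. g e')"
    by (simp add: sum.remove[OF finite_pairs e])
  also have "\<dots> \<le> (\<Sum>e'\<in>pairs n - {e}.
      1 + \<bar>logistic (dHam s Gs \<beta> n Xp e') - logistic (dHam s Gs \<beta> n Xm e')\<bar>)"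
    unfolding g_def by (intro sum_mono coupled_integral_le[OF X]) auto
  also have "\<dots> \<le> real P - \<delta>"
    using contraction e \<open>P > 0\<close> unfolding P_def by (simp add: sum.distrib of_nat_diff)
  finally have "coupled_exp_dist s Gs \<beta> n Xp Xm \<le> (real P - \<delta>) / real P"
    unfolding coupled_exp_dist_def g_def P_def using e
    by (subst integral_pmf_of_set) (auto intro: divide_right_mono)
  also have "\<dots> = 1 - \<delta> / real P"
    using \<open>P > 0\<close> by (simp add: field_simps)
  also have "\<dots> \<le> 1 - \<delta> / real n ^ 2"
    using card_pairs_le[of n] \<open>P > 0\<close> \<open>0 \<le> \<delta>\<close> unfolding P_def
    by (simp add: frac_le flip: of_nat_power)
  finally show ?thesis .
qed

section \<open>Contraction\<close>

lemma isCont_less_on_ball: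
  fixes f :: "'a::metric_space \<Rightarrow> real"
  assumes "isCont f x" "f x < A"
  obtains \<rho> where "0 < \<rho>" "\<forall>z\<in>ball x \<rho>. f z < A"
proof -
  obtain \<rho> where "0 < \<rho>" "\<forall>z. dist z x < \<rho> \<longrightarrow> dist (f z) (f x) < A - f x"
    using assms continuous_at_eps_delta[of x f] by (metis diff_gt_0_iff_gt)
  moreover have "f z < A" if "z \<in> ball x \<rho>" "\<forall>z. dist z x < \<rho> \<longrightarrow> dist (f z) (f x) < A - f x" for z
    using that by (auto simp: dist_commute dist_real_def abs_less_iff)
  ultimately show thesis
    using that by blast
qed

lemma exists_factors_above_mult_lt_one:
  fixes a b :: real
  assumes "0 < a" "a * b < 1"
  obtains A B where "a < A" "b < B" "0 < B" "A * B < 1"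
proof -
  have "max b 0 < 1 / a"
    using assms by (simp add: field_simps)
  then obtain B where B: "max b 0 < B" "B < 1 / a"
    using dense by blast
  then have "a < 1 / B"
    using assms(1) by (simp add: field_simps)
  then obtain A where "a < A" "A < 1 / B"
    using dense by blast
  with B show thesis
    by (intro that[of A B]) (simp_all add: field_simps)
qed

lemma dHam_close_to_Psi:
  fixes p \<rho> :: real
  assumes graphs: "\<forall>i\<in>{1..s}. is_graph (Gs i) \<and> fst (Gs i) \<le> L" and "0 \<le> p" "0 < \<rho>"
  obtains t where "0 < t"
    "\<And>n Y e \<epsilon>. 0 < n \<Longrightarrow> L \<le> n \<Longrightarrow> real L * real L \<le> t * real n \<Longrightarrow> e \<in> pairs n \<Longrightarrow>
       \<forall>G\<in>HL L. \<bar>rG n G Y e - p\<bar> < \<epsilon> \<Longrightarrow> 0 \<le> \<epsilon> \<Longrightarrow> \<epsilon> \<le> t \<Longrightarrow>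
       \<bar>dHam s Gs \<beta> n Y e - Psi s Gs \<beta> p\<bar> < \<rho>"
proof -
  define S where "S = (\<Sum>i=1..s. \<bar>\<beta> i\<bar>)"
  define C where "C = dPsi s Gs (\<lambda>i. \<bar>\<beta> i\<bar>) (p + 1)"
  have "0 \<le> S" "0 \<le> C"
    unfolding S_def C_def using \<open>0 \<le> p\<close> by (auto intro: sum_nonneg dPsi_abs_nonneg)
  define t where "t = min 1 (\<rho> / (2 * S + C + 1))"
  have "0 < t" "t \<le> 1"
    unfolding t_def using \<open>0 < \<rho>\<close> \<open>0 \<le> S\<close> \<open>0 \<le> C\<close> by simp_all
  have "2 * t * S + t * C < t * (2 * S + C + 1)"
    using \<open>0 < t\<close> by (simp add: algebra_simps)
  also have "\<dots> \<le> \<rho>"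
    unfolding t_def using \<open>0 \<le> S\<close> \<open>0 \<le> C\<close> by (simp add: min_mult_distrib_right min.coboundedI2)
  finally have t\<rho>: "2 * t * S + t * C < \<rho>" .
  show thesis
  proof (rule that[OF \<open>0 < t\<close>])
    fix n Y e \<epsilon>
    assume n: "0 < n" "L \<le> n" "real L * real L \<le> t * real n" and e: "e \<in> pairs n"
      and r: "\<forall>G\<in>HL L. \<bar>rG n G Y e - p\<bar> < \<epsilon>" and \<epsilon>: "0 \<le> \<epsilon>" "\<epsilon> \<le> t"
    have "\<bar>dHam s Gs \<beta> n Y e - Psi s Gs \<beta> p\<bar> \<le> 2 * t * S + \<epsilon> * C"
      unfolding S_def C_def using \<epsilon> \<open>t \<le> 1\<close> \<open>0 < t\<close> \<open>0 \<le> p\<close>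
      by (intro dHam_approx[OF graphs n e r]) auto
    also have "\<dots> \<le> 2 * t * S + t * C"
      using \<epsilon> \<open>0 \<le> C\<close> by (simp add: mult_right_mono)
    finally show "\<bar>dHam s Gs \<beta> n Y e - Psi s Gs \<beta> p\<bar> < \<rho>"
      using t\<rho> by simp
  qed
qed

lemma sum_logistic_dHam_diff_le:
  fixes p \<epsilon> A \<rho> c :: real
  assumes graphs: "\<forall>i\<in>{1..s}. is_graph (Gs i) \<and> fst (Gs i) \<le> L"
    and ferro: "\<forall>i\<in>{1..s}. 2 \<le> card (snd (Gs i)) \<longrightarrow> 0 \<le> \<beta> i"
    and n: "0 < n" and X: "Xm \<subseteq> Xp" "Xp - Xm = {e}" and e: "e \<in> pairs n"
    and r: "\<forall>G\<in>HL L. \<bar>rG n G Xp e - p\<bar> < \<epsilon>" and "0 \<le> p" "0 \<le> \<epsilon>"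
    and close: "\<forall>e'\<in>pairs n. dHam s Gs \<beta> n Xp e' \<in> ball c \<rho> \<and> dHam s Gs \<beta> n Xm e' \<in> ball c \<rho>"
    and slope: "\<forall>z\<in>ball c \<rho>. logistic_deriv z \<le> A"
  shows "(\<Sum>e'\<in>pairs n - {e}. \<bar>logistic (dHam s Gs \<beta> n Xp e') - logistic (dHam s Gs \<beta> n Xm e')\<bar>)
      \<le> A * dPsi s Gs \<beta> (p + \<epsilon>)"
proof -
  have "\<forall>G\<in>HL L. rG n G Xp e \<le> p + \<epsilon>"
  proof
    fix G assume "G \<in> HL L"
    then show "rG n G Xp e \<le> p + \<epsilon>"
      using r by fastforce
  qed
  then have "(\<Sum>e'\<in>pairs n - {e}. \<bar>dHam s Gs \<beta> n Xp e' - dHam s Gs \<beta> n Xm e'\<bar>)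
      \<le> dPsi s Gs (\<lambda>i. \<bar>\<beta> i\<bar>) (p + \<epsilon>)"
    using assms(8,9) by (intro sum_dHam_diff_le[OF graphs n X e]) auto
  also have "\<dots> = dPsi s Gs \<beta> (p + \<epsilon>)"
    using ferro by (rule dPsi_abs_eq)
  finally have sum_le: "(\<Sum>e'\<in>pairs n - {e}. \<bar>dHam s Gs \<beta> n Xp e' - dHam s Gs \<beta> n Xm e'\<bar>)
      \<le> dPsi s Gs \<beta> (p + \<epsilon>)" .
  have "0 \<le> A"
  proof -
    have "0 < \<rho>"
      using close e zero_le_dist[of c] by (meson le_less_trans mem_ball)
    then have "logistic_deriv c \<le> A"
      using slope by simp
    then show ?thesis
      using logistic_deriv_pos[of c] by linarith
  qed
  with sum_le have "A * (\<Sum>e'\<in>pairs n - {e}. \<bar>dHam s Gs \<beta> n Xp e' - dHam s Gs \<beta> n Xm e'\<bar>)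
      \<le> A * dPsi s Gs \<beta> (p + \<epsilon>)"
    by (rule mult_left_mono)
  moreover have "(\<Sum>e'\<in>pairs n - {e}. \<bar>logistic (dHam s Gs \<beta> n Xp e') - logistic (dHam s Gs \<beta> n Xm e')\<bar>)
      \<le> A * (\<Sum>e'\<in>pairs n - {e}. \<bar>dHam s Gs \<beta> n Xp e' - dHam s Gs \<beta> n Xm e'\<bar>)"
    unfolding sum_distrib_left using slope close by (intro sum_mono logistic_lipschitz_on_ball) auto
  ultimately show ?thesis
    by linarith
qed

lemma logistic_contraction:
  fixes pstar :: real
  assumes graphs: "\<forall>i\<in>{1..s}. is_graph (Gs i) \<and> fst (Gs i) \<le> L"
    and ferro: "\<forall>i\<in>{1..s}. 2 \<le> card (snd (Gs i)) \<longrightarrow> 0 \<le> \<beta> i"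
    and "0 \<le> pstar"
    and contracting: "logistic_deriv (Psi s Gs \<beta> pstar) * dPsi s Gs \<beta> pstar < 1"
  obtains \<epsilon> \<delta> N0 where "0 < \<epsilon>" "0 < \<delta>"
    "\<And>n Xp Xm e. N0 \<le> n \<Longrightarrow> Xm \<subseteq> Xp \<Longrightarrow> Xp - Xm = {e} \<Longrightarrow> e \<in> pairs n \<Longrightarrow>
       \<forall>Y\<in>{Xp, Xm}. \<forall>G\<in>HL L. \<forall>e'\<in>pairs n. \<bar>rG n G Y e' - pstar\<bar> < \<epsilon> \<Longrightarrow>
       (\<Sum>e'\<in>pairs n - {e}.
          \<bar>logistic (dHam s Gs \<beta> n Xp e') - logistic (dHam s Gs \<beta> n Xm e')\<bar>) \<le> 1 - \<delta>"
proof -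
  define x0 where "x0 = Psi s Gs \<beta> pstar"
  obtain A B where A: "logistic_deriv x0 < A" and B: "dPsi s Gs \<beta> pstar < B" "0 < B" and "A * B < 1"
    using exists_factors_above_mult_lt_one[OF logistic_deriv_pos contracting[folded x0_def]] by blast
  obtain \<rho> where "0 < \<rho>" and \<rho>: "\<forall>z\<in>ball x0 \<rho>. logistic_deriv z < A"
    using isCont_less_on_ball[OF isCont_logistic_deriv A] by blast
  obtain \<epsilon>1 where "0 < \<epsilon>1" and \<epsilon>1: "\<forall>p\<in>ball pstar \<epsilon>1. dPsi s Gs \<beta> p < B"
    using isCont_less_on_ball[OF isCont_dPsi B(1)] by blast
  obtain t where "0 < t" and t: "\<And>n Y e \<epsilon>. 0 < n \<Longrightarrow> L \<le> n \<Longrightarrow> real L * real L \<le> t * real n \<Longrightarrow>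
      e \<in> pairs n \<Longrightarrow> \<forall>G\<in>HL L. \<bar>rG n G Y e - pstar\<bar> < \<epsilon> \<Longrightarrow> 0 \<le> \<epsilon> \<Longrightarrow> \<epsilon> \<le> t \<Longrightarrow>
      \<bar>dHam s Gs \<beta> n Y e - x0\<bar> < \<rho>"
    using dHam_close_to_Psi[OF graphs \<open>0 \<le> pstar\<close> \<open>0 < \<rho>\<close>] unfolding x0_def by blast
  define \<epsilon> where "\<epsilon> = min t (\<epsilon>1 / 2)"
  have \<epsilon>: "0 < \<epsilon>" "\<epsilon> \<le> t" "\<epsilon> < \<epsilon>1"
    unfolding \<epsilon>_def using \<open>0 < t\<close> \<open>0 < \<epsilon>1\<close> by auto
  obtain N where N: "real L * real L / t < real N"
    using reals_Archimedean2 by blast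
  have "0 < 1 - A * B"
    using \<open>A * B < 1\<close> by simp
  show thesis
  proof (rule that[OF \<epsilon>(1) \<open>0 < 1 - A * B\<close>, of "N + L + 1"])
    fix n Xp Xm e
    assume n: "N + L + 1 \<le> n" and X: "Xm \<subseteq> Xp" "Xp - Xm = {e}" and e: "e \<in> pairs n"
      and H: "\<forall>Y\<in>{Xp, Xm}. \<forall>G\<in>HL L. \<forall>e'\<in>pairs n. \<bar>rG n G Y e' - pstar\<bar> < \<epsilon>"
    have "real L * real L < t * real N"
      using N \<open>0 < t\<close> by (simp add: pos_divide_less_eq mult.commute)
    also have "\<dots> \<le> t * real n"
      using n \<open>0 < t\<close> by simp
    finally have n: "0 < n" "L \<le> n" "real L * real L \<le> t * real n"
      using n by simp_all
    have "dHam s Gs \<beta> n Y e' \<in> ball x0 \<rho>" if "Y \<in> {Xp, Xm}" "e' \<in> pairs n" for Y e'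
    proof -
      have "\<forall>G\<in>HL L. \<bar>rG n G Y e' - pstar\<bar> < \<epsilon>"
        using H that by blast
      then show ?thesis
        using t[OF n that(2) _ _ \<epsilon>(2)] \<epsilon>(1) by (simp add: dist_real_def abs_minus_commute)
    qed
    moreover have "\<forall>G\<in>HL L. \<bar>rG n G Xp e - pstar\<bar> < \<epsilon>"
      using H e by blast
    ultimately have "(\<Sum>e'\<in>pairs n - {e}.
        \<bar>logistic (dHam s Gs \<beta> n Xp e') - logistic (dHam s Gs \<beta> n Xm e')\<bar>) \<le> A * dPsi s Gs \<beta> (pstar + \<epsilon>)"
      using \<rho> \<open>0 \<le> pstar\<close> \<epsilon>(1)
      by (intro sum_logistic_dHam_diff_le[OF graphs ferro n(1) X e]) (auto simp: less_imp_le)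
    also have "\<dots> \<le> A * B"
    proof (rule mult_left_mono)
      have "pstar + \<epsilon> \<in> ball pstar \<epsilon>1"
        using \<epsilon> by (simp add: dist_real_def)
      then show "dPsi s Gs \<beta> (pstar + \<epsilon>) \<le> B"
        using \<epsilon>1 less_imp_le by blast
      show "0 \<le> A"
        using A logistic_deriv_pos[of x0] by simp
    qed
    finally show "(\<Sum>e'\<in>pairs n - {e}.
        \<bar>logistic (dHam s Gs \<beta> n Xp e') - logistic (dHam s Gs \<beta> n Xm e')\<bar>) \<le> 1 - (1 - A * B)"
      by simp
  qed
qed

theorem mainTheorem9:
  fixes s L :: nat and Gs :: "nat \<Rightarrow> pgraph" and \<beta> :: "nat \<Rightarrow> real" and pstar :: real
  assumes "s \<ge> 1"
    and "\<forall>i \<in> {1..s}. is_graph (Gs i)"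
    and "Gs 1 = (2, {{1, 2}})"
    and "\<forall>i \<in> {1..s}. fst (Gs i) \<le> L"
    and "\<forall>i \<in> {2..s}. \<beta> i > 0"
    and "pstar \<in> {0..1}"
    and "phi s Gs \<beta> pstar = pstar"
    and "0 < deriv (phi s Gs \<beta>) pstar" and "deriv (phi s Gs \<beta>) pstar < 1"
  shows "\<exists>\<epsilon>>0. \<exists>\<delta>>0. \<exists>N0. \<forall>n \<ge> N0. \<forall>Xp Xm e.
           Xp \<subseteq> pairs n \<and> Xm \<subseteq> Xp \<and> e \<in> pairs n \<and> Xp - Xm = {e} \<and>
           (\<forall>Y \<in> {Xp, Xm}. \<forall>G \<in> HL L. \<forall>e' \<in> pairs n. \<bar>rG n G Y e' - pstar\<bar> < \<epsilon>)
           \<longrightarrow> coupled_exp_dist s Gs \<beta> n Xp Xm \<le> 1 - \<delta> / real n ^ 2"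
proof -
  have graphs: "\<forall>i\<in>{1..s}. is_graph (Gs i) \<and> fst (Gs i) \<le> L"
    using assms(2,4) by blast
  have ferro: "\<forall>i\<in>{1..s}. 2 \<le> card (snd (Gs i)) \<longrightarrow> 0 \<le> \<beta> i"
  proof (intro ballI impI)
    fix i assume i: "i \<in> {1..s}" and "2 \<le> card (snd (Gs i))"
    then have "i \<noteq> 1"
      using assms(3) by auto
    with i assms(5) show "0 \<le> \<beta> i"
      by (simp add: less_imp_le)
  qed
  have "0 \<le> pstar"
    using assms(6) by simp
  moreover have "logistic_deriv (Psi s Gs \<beta> pstar) * dPsi s Gs \<beta> pstar < 1"
    using assms(9) by (simp add: deriv_phi)
  ultimately show ?thesis
  proof (rule logistic_contraction[OF graphs ferro], goal_cases)
    case (1 \<epsilon> \<delta> N0)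
    show ?case
    proof (rule exI[of _ \<epsilon>], rule conjI[OF 1(1)], rule exI[of _ \<delta>], rule conjI[OF 1(2)],
        rule exI[of _ N0], intro allI impI)
      fix n Xp Xm e
      assume "N0 \<le> n" and "Xp \<subseteq> pairs n \<and> Xm \<subseteq> Xp \<and> e \<in> pairs n \<and> Xp - Xm = {e} \<and>
        (\<forall>Y\<in>{Xp, Xm}. \<forall>G\<in>HL L. \<forall>e'\<in>pairs n. \<bar>rG n G Y e' - pstar\<bar> < \<epsilon>)"
      then show "coupled_exp_dist s Gs \<beta> n Xp Xm \<le> 1 - \<delta> / real n ^ 2"
        using 1(2,3) by (intro coupled_exp_dist_le) auto
    qed
  qed
qed

end
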